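(* Let $(X,d)$ be a complete metric space, $N\in\mathbb{N}\setminus\{0\}$, $\alpha:(X\times X)\times(X\times X)\rightarrow[0,+\infty)$ an $N$--transitive mapping on $X\times X$, and $F:X\times X\rightarrow X$ such that for every $\varepsilon>0$ there exists $\delta(\varepsilon)>0$ for which, for all $(x,y),(u,v)\in X\times X$, \[ \varepsilon\leq\tfrac{d(x,u)+d(y,v)}{2}<\varepsilon+\delta(\varepsilon)\Rightarrow\alpha((x,y),(u,v))\,d(F(x,y),F(u,v))<\varepsilon. \] Suppose that: (B1) for all $(x,y),(u,v)\in X\times X$, $\alpha((x,y),(u,v))\geq1$ implies $\alpha((F(x,y),F(y,x)),(F(u,v),F(v,u)))\geq1$; (B2) there exists $(x_{0},y_{0})\in X\times X$ such that $\alpha((x_{0},y_{0}),(F(x_{0},y_{0}),F(y_{0},x_{0})))\geq1$ and $\alpha((F(y_{0},x_{0}),F(x_{0},y_{0})),(y_{0},x_{0}))\geq1$; (B3) $F$ is continuous. Then $F$ has a coupled fixed point, i.e., there exists $(x^{\ast},y^{\ast})\in X\times X$ with $x^{\ast}=F(x^{\ast},y^{\ast})$ and $y^{\ast}=F(y^{\ast},x^{\ast})$.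
   Context: $\mathbb{N}$ is the set of non-negative integers. For a set $Z$ and $\gamma:Z\times Z\rightarrow[0,+\infty)$, $\gamma$ is $N$--transitive (on $Z$) if for all $z_0,\dots,z_{N+1}\in Z$ with $\gamma(z_i,z_{i+1})\geq1$ for all $i\in\{0,\dots,N\}$ one has $\gamma(z_0,z_{N+1})\geq1$; here $Z=X\times X$. *)

theory Defs
  imports "HOL-Analysis.Analysis"
begin

definition N_transitive :: "nat \<Rightarrow> 'z set \<Rightarrow> ('z \<Rightarrow> 'z \<Rightarrow> real) \<Rightarrow> bool" where
  "N_transitive N Z \<gamma> \<longleftrightarrow>
     (\<forall>z :: nat \<Rightarrow> 'z. (\<forall>i\<le>N+1. z i \<in> Z) \<longrightarrow> (\<forall>i\<le>N. \<gamma> (z i) (z (Suc i)) \<ge> 1)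
        \<longrightarrow> \<gamma> (z 0) (z (N+1)) \<ge> 1)"

end

theory Submission
  imports Defs
begin

text \<open>
  The coupled problem becomes a fixed point problem for \<open>G (x, y) = (F x y, F y x)\<close> on
  \<open>X \<times> X\<close> with the averaged distance \<open>\<rho> ((x, y), (u, v)) = (d x u + d y v) / 2\<close>. On pairs
  related by \<open>\<alpha> p q \<ge> 1 \<and> \<alpha> (swap q) (swap p) \<ge> 1\<close> the map \<open>G\<close> is a Meir--Keeler
  contraction; this relation is preserved by \<open>G\<close> and is \<open>N\<close>-transitive, and (B2) makes the
  orbit \<open>z\<close> of \<open>(x\<^sub>0, y\<^sub>0)\<close> a chain of related points. So consecutive distances decrease to 0,
  and since \<open>z n\<close> is related to every \<open>z (n + k N + 1)\<close>, the Meir--Keeler condition bounds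
  \<open>\<rho> (z n) (z (n + k N + 1))\<close> uniformly in \<open>k\<close>: the orbit is Cauchy. By continuity its limit
  is a fixed point of \<open>G\<close>.
\<close>

locale meir_keeler_relation =
  fixes \<rho> :: "'p \<Rightarrow> 'p \<Rightarrow> real" and R :: "'p \<Rightarrow> 'p \<Rightarrow> bool" and G :: "'p \<Rightarrow> 'p" and N :: nat
  assumes dist_self: "\<rho> p p = 0"
    and dist_eq_0: "\<rho> p q = 0 \<Longrightarrow> p = q"
    and dist_commute: "\<rho> p q = \<rho> q p"
    and dist_triangle: "\<rho> p r \<le> \<rho> p q + \<rho> q r"
    and N_pos: "N \<noteq> 0"
    and R_transitive: "(\<And>i. i \<le> N \<Longrightarrow> R (w i) (w (Suc i))) \<Longrightarrow> R (w 0) (w (N + 1))"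
    and R_map: "R p q \<Longrightarrow> R (G p) (G q)"
    and meir_keeler: "\<epsilon> > 0 \<Longrightarrow>
      \<exists>\<delta>>0. \<forall>p q. R p q \<and> \<epsilon> \<le> \<rho> p q \<and> \<rho> p q < \<epsilon> + \<delta> \<longrightarrow> \<rho> (G p) (G q) < \<epsilon>"
begin

lemma dist_nonneg: "0 \<le> \<rho> p q"
  using dist_triangle[of p p q] dist_self[of p] dist_commute[of q p] by simp

lemma contraction_le:
  assumes "R p q"
  shows "\<rho> (G p) (G q) \<le> \<rho> p q"
proof (cases "\<rho> p q = 0")
  case True
  then have "p = q" by (rule dist_eq_0)
  then show ?thesis by (simp add: dist_self)
next
  case False
  then have "\<rho> p q > 0" using dist_nonneg less_eq_real_def by auto
  from meir_keeler[OF this] show ?thesis using assms by force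
qed

lemma meir_keeler_lt:
  assumes "\<epsilon> > 0"
  obtains \<delta> where "\<delta> > 0" "\<And>p q. R p q \<Longrightarrow> \<rho> p q < \<epsilon> + \<delta> \<Longrightarrow> \<rho> (G p) (G q) < \<epsilon>"
proof -
  obtain \<delta> where "\<delta> > 0"
    and \<delta>: "\<forall>p q. R p q \<and> \<epsilon> \<le> \<rho> p q \<and> \<rho> p q < \<epsilon> + \<delta> \<longrightarrow> \<rho> (G p) (G q) < \<epsilon>"
    using meir_keeler[OF assms] by blast
  have "\<rho> (G p) (G q) < \<epsilon>" if "R p q" "\<rho> p q < \<epsilon> + \<delta>" for p q
    using \<delta> that contraction_le[OF that(1)] by (cases "\<epsilon> \<le> \<rho> p q") auto
  with \<open>\<delta> > 0\<close> show thesis using that by blast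
qed

context
  fixes x assumes R_start: "R x (G x)"
begin

lemma R_orbit_Suc: "R ((G ^^ n) x) ((G ^^ Suc n) x)"
  by (induction n) (simp_all add: R_start R_map)

lemma R_orbit_far: "R ((G ^^ n) x) ((G ^^ (n + k * N + 1)) x)"
proof (induction k)
  case 0
  show ?case using R_orbit_Suc by simp
next
  case (Suc k)
  let ?w = "\<lambda>i. if i = 0 then (G ^^ n) x else (G ^^ (n + k * N + i)) x"
  have "R (?w i) (?w (Suc i))" for i
    using Suc R_orbit_Suc[of "n + k * N + i"] by (simp add: add.assoc)
  from R_transitive[of ?w, OF this] show ?case by (simp add: algebra_simps)
qed

lemma orbit_step_tendsto_0: "(\<lambda>n. \<rho> ((G ^^ n) x) ((G ^^ Suc n) x)) \<longlonglongrightarrow> 0"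
proof -
  define D where "D n = \<rho> ((G ^^ n) x) ((G ^^ Suc n) x)" for n
  have "decseq D"
    unfolding decseq_Suc_iff D_def using contraction_le[OF R_orbit_Suc] by simp
  then obtain L where D_lim: "D \<longlonglongrightarrow> L" and L_le: "\<And>n. L \<le> D n"
    using decseq_convergent[of D 0] dist_nonneg unfolding D_def by blast
  have "0 \<le> L"
    using D_lim dist_nonneg by (intro LIMSEQ_le_const) (auto simp: D_def)
  have "L = 0"
  proof (rule ccontr)
    assume "L \<noteq> 0"
    with \<open>0 \<le> L\<close> have "L > 0" by simp
    then obtain \<delta> where "\<delta> > 0"
      and \<delta>: "\<And>p q. R p q \<Longrightarrow> \<rho> p q < L + \<delta> \<Longrightarrow> \<rho> (G p) (G q) < L"
      using meir_keeler_lt by blast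
    obtain n where "D n < L + \<delta>"
      using order_tendstoD(2)[OF D_lim, of "L + \<delta>"] \<open>\<delta> > 0\<close> by (auto dest: eventually_happens)
    then have "D (Suc n) < L" using \<delta>[OF R_orbit_Suc] unfolding D_def by simp
    with L_le show False by (meson not_le)
  qed
  with D_lim show ?thesis unfolding D_def by simp
qed

lemma orbit_dist_le:
  fixes s :: real
  assumes step: "\<And>m. n\<^sub>0 \<le> m \<Longrightarrow> \<rho> ((G ^^ m) x) ((G ^^ Suc m) x) \<le> s" and "n\<^sub>0 \<le> n"
  shows "\<rho> ((G ^^ n) x) ((G ^^ (n + r)) x) \<le> real r * s"
proof (induction r)
  case 0
  show ?case by (simp add: dist_self)
next
  case (Suc r)
  have "\<rho> ((G ^^ n) x) ((G ^^ (n + Suc r)) x)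
      \<le> \<rho> ((G ^^ n) x) ((G ^^ (n + r)) x) + \<rho> ((G ^^ (n + r)) x) ((G ^^ Suc (n + r)) x)"
    using dist_triangle by simp
  also have "\<dots> \<le> r * s + s" using Suc step[of "n + r"] \<open>n\<^sub>0 \<le> n\<close> by simp
  finally show ?case by (simp add: algebra_simps)
qed

text \<open>Since \<open>z n\<close> is related to \<open>z (n + k N + 1)\<close>, the Meir--Keeler bound propagates from
  one block of \<open>N\<close> steps to the next; the required slack \<open>N s \<le> \<delta>\<close> does not grow with \<open>k\<close>.\<close>

lemma orbit_dist_far_lt:
  fixes s \<epsilon> \<delta> :: real
  assumes step: "\<And>m. n\<^sub>0 \<le> m \<Longrightarrow> \<rho> ((G ^^ m) x) ((G ^^ Suc m) x) < s"
    and \<delta>: "\<And>p q. R p q \<Longrightarrow> \<rho> p q < \<epsilon> + \<delta> \<Longrightarrow> \<rho> (G p) (G q) < \<epsilon>"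
    and "N * s \<le> \<delta>" "0 \<le> \<epsilon>" "n\<^sub>0 \<le> n"
  shows "\<rho> ((G ^^ n) x) ((G ^^ (n + k * N + 1)) x) < \<epsilon> + N * s"
proof (induction k)
  case 0
  have "0 \<le> s" using le_less_trans[OF dist_nonneg step[OF order_refl]] by simp
  moreover have "1 \<le> real N" using N_pos by simp
  ultimately have "s \<le> N * s" using mult_right_mono[of 1 "real N" s] by simp
  then show ?case using step[OF \<open>n\<^sub>0 \<le> n\<close>] \<open>0 \<le> \<epsilon>\<close> by simp
next
  case (Suc k)
  let ?z = "\<lambda>i. (G ^^ i) x" and ?j = "Suc (n + k * N + 1)"
  have last: "?j + (N - 1) = n + Suc k * N + 1" using N_pos by simp
  have "\<rho> (?z n) (?z (n + Suc k * N + 1))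
      \<le> \<rho> (?z n) (?z (Suc n)) + \<rho> (?z (Suc n)) (?z ?j) + \<rho> (?z ?j) (?z (?j + (N - 1)))"
    unfolding last using dist_triangle[of "?z n" _ "?z (Suc n)"] dist_triangle[of "?z (Suc n)" _ "?z ?j"]
    by (smt (verit))
  moreover have "\<rho> (?z (Suc n)) (?z ?j) < \<epsilon>"
    using \<delta>[OF R_orbit_far] Suc \<open>N * s \<le> \<delta>\<close> by simp
  moreover have "\<rho> (?z ?j) (?z (?j + (N - 1))) \<le> real (N - 1) * s"
    using orbit_dist_le[of n\<^sub>0 s ?j "N - 1"] step \<open>n\<^sub>0 \<le> n\<close> by (simp add: less_imp_le)
  moreover have "real (N - 1) * s + s = N * s" using N_pos by (simp add: algebra_simps)
  ultimately show ?case using step[OF \<open>n\<^sub>0 \<le> n\<close>] by simp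
qed

lemma orbit_Cauchy:
  assumes "e > 0"
  shows "\<exists>M. \<forall>m\<ge>M. \<forall>n\<ge>M. \<rho> ((G ^^ m) x) ((G ^^ n) x) < e"
proof -
  let ?z = "\<lambda>i. (G ^^ i) x"
  obtain \<delta> where "\<delta> > 0" and \<delta>: "\<And>p q. R p q \<Longrightarrow> \<rho> p q < e / 2 + \<delta> \<Longrightarrow> \<rho> (G p) (G q) < e / 2"
    using meir_keeler_lt[of "e / 2"] \<open>e > 0\<close> by auto
  define s where "s = min \<delta> (e / 4) / N"
  have Ns: "N * s = min \<delta> (e / 4)" using N_pos unfolding s_def by simp
  then have "s > 0" using \<open>\<delta> > 0\<close> \<open>e > 0\<close> N_pos by (simp add: s_def)
  then obtain n\<^sub>0 where step: "\<And>m. n\<^sub>0 \<le> m \<Longrightarrow> \<rho> (?z m) (?z (Suc m)) < s"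
    using order_tendstoD(2)[OF orbit_step_tendsto_0] by (auto simp: eventually_sequentially)
  have ordered: "\<rho> (?z n) (?z m) < e" if "n\<^sub>0 \<le> n" "n \<le> m" for n m
  proof (cases "m = n")
    case True
    then show ?thesis using \<open>e > 0\<close> by (simp add: dist_self)
  next
    case False
    define j r where "j = (m - n - 1) div N" and "r = (m - n - 1) mod N"
    have m: "m = n + j * N + 1 + r" "r < N"
      using False \<open>n \<le> m\<close> N_pos div_mult_mod_eq[of "m - n - 1" N] unfolding j_def r_def by auto
    have "\<rho> (?z n) (?z m)
        \<le> \<rho> (?z n) (?z (n + j * N + 1)) + \<rho> (?z (n + j * N + 1)) (?z (n + j * N + 1 + r))"
      unfolding m(1) by (rule dist_triangle)
    also have "\<dots> < (e / 2 + N * s) + r * s"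
    proof (rule add_less_le_mono)
      show "\<rho> (?z n) (?z (n + j * N + 1)) < e / 2 + N * s"
        using orbit_dist_far_lt[OF step \<delta>] Ns \<open>e > 0\<close> \<open>n\<^sub>0 \<le> n\<close> by simp
      show "\<rho> (?z (n + j * N + 1)) (?z (n + j * N + 1 + r)) \<le> r * s"
        using orbit_dist_le[of n\<^sub>0 s "n + j * N + 1" r] step \<open>n\<^sub>0 \<le> n\<close> by (simp add: less_imp_le)
    qed
    also have "\<dots> \<le> e / 2 + 2 * (N * s)"
      using \<open>r < N\<close> \<open>s > 0\<close> by simp
    also have "\<dots> \<le> e" using Ns by linarith
    finally show ?thesis .
  qed
  have "\<rho> (?z m) (?z n) < e" if "n\<^sub>0 \<le> m" "n\<^sub>0 \<le> n" for m n
    using that ordered[of m n] ordered[of n m] dist_commute[of "?z m" "?z n"] by (cases "m \<le> n") auto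
  then show ?thesis by blast
qed

end

end

definition avg_dist :: "'a::metric_space \<times> 'a \<Rightarrow> 'a \<times> 'a \<Rightarrow> real" where
  "avg_dist p q = (dist (fst p) (fst q) + dist (snd p) (snd q)) / 2"

definition coupled_map :: "('a \<Rightarrow> 'a \<Rightarrow> 'a) \<Rightarrow> 'a \<times> 'a \<Rightarrow> 'a \<times> 'a" where
  "coupled_map F p = (F (fst p) (snd p), F (snd p) (fst p))"

definition swap_related :: "('a \<times> 'a \<Rightarrow> 'a \<times> 'a \<Rightarrow> real) \<Rightarrow> 'a \<times> 'a \<Rightarrow> 'a \<times> 'a \<Rightarrow> bool" where
  "swap_related \<alpha> p q \<longleftrightarrow> 1 \<le> \<alpha> p q \<and> 1 \<le> \<alpha> (prod.swap q) (prod.swap p)"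

lemma avg_dist_triangle: "avg_dist p r \<le> avg_dist p q + avg_dist q r"
  using dist_triangle[of "fst p" "fst r" "fst q"] dist_triangle[of "snd p" "snd r" "snd q"]
  unfolding avg_dist_def by (simp add: field_simps)

lemma avg_dist_eq_0_iff: "avg_dist p q = 0 \<longleftrightarrow> p = q"
  unfolding avg_dist_def by (auto simp: add_nonneg_eq_0_iff prod_eq_iff)

lemma dist_le_twice_avg_dist: "dist p q \<le> 2 * avg_dist p q"
proof -
  obtain a b c d where "p = (a, b)" "q = (c, d)" by (cases p, cases q)
  then show ?thesis
    using sqrt_sum_squares_le_sum[of "dist a c" "dist b d"] by (simp add: avg_dist_def dist_Pair_Pair)
qed

lemma swap_related_transitive:
  assumes "N_transitive N UNIV \<alpha>" and chain: "\<And>i. i \<le> N \<Longrightarrow> swap_related \<alpha> (w i) (w (Suc i))"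
  shows "swap_related \<alpha> (w 0) (w (N + 1))"
proof -
  have "1 \<le> \<alpha> (w 0) (w (N + 1))"
    using assms unfolding N_transitive_def swap_related_def by simp
  moreover have "1 \<le> \<alpha> (prod.swap (w (N + 1))) (prod.swap (w 0))"
  proof -
    have "1 \<le> \<alpha> (prod.swap (w (N + 1 - i))) (prod.swap (w (N + 1 - Suc i)))" if "i \<le> N" for i
      using chain[of "N - i"] that by (simp add: swap_related_def Suc_diff_le)
    then show ?thesis
      using assms(1) unfolding N_transitive_def
      by (auto dest!: spec[of _ "\<lambda>i. prod.swap (w (N + 1 - i))"])
  qed
  ultimately show ?thesis unfolding swap_related_def by simp
qed

lemma swap_related_coupled_map:
  assumes "\<And>x y u v. 1 \<le> \<alpha> (x, y) (u, v) \<Longrightarrow> 1 \<le> \<alpha> (F x y, F y x) (F u v, F v u)"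
    and "swap_related \<alpha> p q"
  shows "swap_related \<alpha> (coupled_map F p) (coupled_map F q)"
  using assms(2) assms(1)[of "fst p" "snd p" "fst q" "snd q"] assms(1)[of "snd q" "fst q" "snd p" "fst p"]
  by (simp add: swap_related_def coupled_map_def prod.swap_def)

text \<open>The contraction hypothesis is applied twice, to \<open>(p, q)\<close> and to \<open>(swap q, swap p)\<close>,
  which have the same averaged distance; the factor \<open>\<alpha> \<ge> 1\<close> is then dropped.\<close>

lemma coupled_map_meir_keeler:
  fixes F :: "'a::metric_space \<Rightarrow> 'a \<Rightarrow> 'a"
  assumes contraction: "\<forall>\<epsilon>>0. \<exists>\<delta>>0. \<forall>x y u v.
        \<epsilon> \<le> (dist x u + dist y v) / 2 \<and> (dist x u + dist y v) / 2 < \<epsilon> + \<delta>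
        \<longrightarrow> \<alpha> (x, y) (u, v) * dist (F x y) (F u v) < \<epsilon>"
    and "\<epsilon> > 0"
  shows "\<exists>\<delta>>0. \<forall>p q. swap_related \<alpha> p q \<and> \<epsilon> \<le> avg_dist p q \<and> avg_dist p q < \<epsilon> + \<delta>
      \<longrightarrow> avg_dist (coupled_map F p) (coupled_map F q) < \<epsilon>"
proof -
  obtain \<delta> where "\<delta> > 0" and \<delta>: "\<And>x y u v.
        \<epsilon> \<le> (dist x u + dist y v) / 2 \<Longrightarrow> (dist x u + dist y v) / 2 < \<epsilon> + \<delta>
        \<Longrightarrow> \<alpha> (x, y) (u, v) * dist (F x y) (F u v) < \<epsilon>"
    using contraction \<open>\<epsilon> > 0\<close> by meson
  have "avg_dist (coupled_map F (a, b)) (coupled_map F (c, d)) < \<epsilon>"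
    if "swap_related \<alpha> (a, b) (c, d)" "\<epsilon> \<le> avg_dist (a, b) (c, d)" "avg_dist (a, b) (c, d) < \<epsilon> + \<delta>"
    for a b c d
  proof -
    have \<alpha>: "1 \<le> \<alpha> (a, b) (c, d)" "1 \<le> \<alpha> (d, c) (b, a)"
      using that(1) by (simp_all add: swap_related_def)
    have "\<alpha> (a, b) (c, d) * dist (F a b) (F c d) < \<epsilon>"
      using \<delta>[where x = a and y = b and u = c and v = d] that(2,3) by (simp add: avg_dist_def)
    moreover have "\<alpha> (d, c) (b, a) * dist (F d c) (F b a) < \<epsilon>"
      using \<delta>[where x = d and y = c and u = b and v = a] that(2,3)
      by (simp add: avg_dist_def dist_commute add.commute)
    moreover have "dist (F a b) (F c d) \<le> \<alpha> (a, b) (c, d) * dist (F a b) (F c d)"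
      "dist (F d c) (F b a) \<le> \<alpha> (d, c) (b, a) * dist (F d c) (F b a)"
      using \<alpha> mult_right_mono[of 1, OF _ zero_le_dist] by simp_all
    ultimately show ?thesis by (simp add: avg_dist_def coupled_map_def dist_commute)
  qed
  with \<open>\<delta> > 0\<close> show ?thesis by (metis prod.collapse)
qed

lemma coupled_meir_keeler_relation:
  fixes F :: "'a::metric_space \<Rightarrow> 'a \<Rightarrow> 'a"
  assumes "N \<noteq> 0" and "N_transitive N UNIV \<alpha>"
    and "\<forall>\<epsilon>>0. \<exists>\<delta>>0. \<forall>x y u v.
        \<epsilon> \<le> (dist x u + dist y v) / 2 \<and> (dist x u + dist y v) / 2 < \<epsilon> + \<delta>
        \<longrightarrow> \<alpha> (x, y) (u, v) * dist (F x y) (F u v) < \<epsilon>"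
    and "\<And>x y u v. 1 \<le> \<alpha> (x, y) (u, v) \<Longrightarrow> 1 \<le> \<alpha> (F x y, F y x) (F u v, F v u)"
  shows "meir_keeler_relation avg_dist (swap_related \<alpha>) (coupled_map F) N"
proof
  show "avg_dist p p = 0" "avg_dist p q = 0 \<Longrightarrow> p = q" for p q :: "'a \<times> 'a"
    by (simp_all add: avg_dist_eq_0_iff)
  show "avg_dist p q = avg_dist q p" for p q :: "'a \<times> 'a"
    by (simp add: avg_dist_def dist_commute add.commute)
  show "avg_dist p r \<le> avg_dist p q + avg_dist q r" for p q r :: "'a \<times> 'a"
    by (rule avg_dist_triangle)
  show "swap_related \<alpha> (w 0) (w (N + 1))"
    if "\<And>i. i \<le> N \<Longrightarrow> swap_related \<alpha> (w i) (w (Suc i))" for w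
    using assms(2) that by (rule swap_related_transitive)
  show "swap_related \<alpha> (coupled_map F p) (coupled_map F q)" if "swap_related \<alpha> p q" for p q
    using swap_related_coupled_map[OF assms(4) that] .
  show "\<exists>\<delta>>0. \<forall>p q. swap_related \<alpha> p q \<and> \<epsilon> \<le> avg_dist p q \<and> avg_dist p q < \<epsilon> + \<delta>
      \<longrightarrow> avg_dist (coupled_map F p) (coupled_map F q) < \<epsilon>" if "\<epsilon> > 0" for \<epsilon>
    using coupled_map_meir_keeler[OF assms(3) that] .
qed (rule assms(1))

lemma Cauchy_if_avg_dist_Cauchy:
  assumes "\<And>e. e > 0 \<Longrightarrow> \<exists>M. \<forall>m\<ge>M. \<forall>n\<ge>M. avg_dist (z m) (z n) < e"
  shows "Cauchy z"
proof (rule metric_CauchyI)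
  fix e :: real assume "e > 0"
  then obtain M where M: "\<forall>m\<ge>M. \<forall>n\<ge>M. avg_dist (z m) (z n) < e / 2"
    using assms[of "e / 2"] by auto
  have "dist (z m) (z n) < e" if "m \<ge> M" "n \<ge> M" for m n
    using M that dist_le_twice_avg_dist[of "z m" "z n"] by force
  then show "\<exists>M. \<forall>m\<ge>M. \<forall>n\<ge>M. dist (z m) (z n) < e" by blast
qed

lemma continuous_on_coupled_map:
  assumes "continuous_on UNIV (\<lambda>p. F (fst p) (snd p))"
  shows "continuous_on UNIV (coupled_map F)"
proof -
  have "continuous_on UNIV (\<lambda>p. F (snd p) (fst p))"
    using continuous_on_compose2[OF assms continuous_on_swap subset_UNIV] by simp
  with assms show ?thesis
    unfolding coupled_map_def by (rule continuous_on_Pair)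
qed

lemma fixed_point_if_orbit_tendsto:
  fixes G :: "'a::t2_space \<Rightarrow> 'a"
  assumes "continuous_on UNIV G" and lim: "(\<lambda>n. (G ^^ n) x) \<longlonglongrightarrow> l"
  shows "G l = l"
proof -
  have "(\<lambda>n. G ((G ^^ n) x)) \<longlonglongrightarrow> G l"
    using continuous_on_tendsto_compose[OF assms] by simp
  moreover have "(\<lambda>n. G ((G ^^ n) x)) \<longlonglongrightarrow> l"
    using LIMSEQ_Suc[OF lim] by simp
  ultimately show ?thesis by (rule LIMSEQ_unique)
qed

theorem corollary1:
  fixes F :: "'a::complete_space \<Rightarrow> 'a \<Rightarrow> 'a"
    and \<alpha> :: "('a \<times> 'a) \<Rightarrow> ('a \<times> 'a) \<Rightarrow> real"
    and N :: nat
  assumes N_pos: "N \<noteq> 0"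
    and alpha_nonneg: "\<And>p q. \<alpha> p q \<ge> 0"
    and alpha_trans: "N_transitive N UNIV \<alpha>"
    and contraction: "\<forall>\<epsilon>>0. \<exists>\<delta>>0. \<forall>x y u v.
        \<epsilon> \<le> (dist x u + dist y v) / 2 \<and> (dist x u + dist y v) / 2 < \<epsilon> + \<delta>
        \<longrightarrow> \<alpha> (x, y) (u, v) * dist (F x y) (F u v) < \<epsilon>"
    and B1: "\<And>x y u v. \<alpha> (x, y) (u, v) \<ge> 1 \<Longrightarrow> \<alpha> (F x y, F y x) (F u v, F v u) \<ge> 1"
    and B2: "\<exists>x0 y0. \<alpha> (x0, y0) (F x0 y0, F y0 x0) \<ge> 1 \<and> \<alpha> (F y0 x0, F x0 y0) (y0, x0) \<ge> 1"
    and B3: "continuous_on UNIV (\<lambda>p. F (fst p) (snd p))"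
  shows "\<exists>xs ys. xs = F xs ys \<and> ys = F ys xs"
proof -
  obtain x\<^sub>0 y\<^sub>0 where "1 \<le> \<alpha> (x\<^sub>0, y\<^sub>0) (F x\<^sub>0 y\<^sub>0, F y\<^sub>0 x\<^sub>0)" "1 \<le> \<alpha> (F y\<^sub>0 x\<^sub>0, F x\<^sub>0 y\<^sub>0) (y\<^sub>0, x\<^sub>0)"
    using B2 by blast
  then have start: "swap_related \<alpha> (x\<^sub>0, y\<^sub>0) (coupled_map F (x\<^sub>0, y\<^sub>0))"
    by (simp add: swap_related_def coupled_map_def)
  have "Cauchy (\<lambda>n. (coupled_map F ^^ n) (x\<^sub>0, y\<^sub>0))"
    using meir_keeler_relation.orbit_Cauchy
      [OF coupled_meir_keeler_relation[OF N_pos alpha_trans contraction B1] start]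
    by (rule Cauchy_if_avg_dist_Cauchy)
  then obtain l where "(\<lambda>n. (coupled_map F ^^ n) (x\<^sub>0, y\<^sub>0)) \<longlonglongrightarrow> l"
    using Cauchy_convergent unfolding convergent_def by blast
  then have "coupled_map F l = l"
    by (rule fixed_point_if_orbit_tendsto[OF continuous_on_coupled_map[OF B3]])
  then obtain a b where "F a b = a" "F b a = b"
    by (cases l) (simp add: coupled_map_def, blast)
  then show ?thesis by (intro exI[of _ a] exI[of _ b]) simp
qed

end
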